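(* For $n=0,1,2,\dots$ let $\alpha_n=1/(n+1)!$, let $\beta_0=0$, $\beta_{n+1}=\sum_{k=0}^{n}\frac{1}{k!(k+2)!}$, and $\beta=\lim_{n\to\infty}\beta_n$. Define $f:\mathbb{R}\to\mathbb{R}$ by $f(x)=x$ if $x>1$; $f(x)=\alpha_{n+1}x+\beta_{n+1}$ if $\alpha_{n+1}<x\le\alpha_n$ ($n=0,1,2,\dots$); $f(0)=\beta$; and $f(x)=f(-x)$ if $x<0$. Then $f$ is continuous and convex with global minimizer $\bar x=0$, and $$T_{\operatorname{gph}\partial_p f}(0,0)=\{(w,z)\mid 0\le z\le w\}\cup\{(w,z)\mid 0\ge z\ge w\}.$$ Consequently, for each $w\in\operatorname{dom}D(\partial_p f)(0|0)$ with $|w|=1$ there is $z\in D(\partial_p f)(0|0)(w)$ with $zw\ge1$ (the sufficient condition of the second kind holds with $\kappa=1$), yet there exist $w\neq0$ and $z\in D(\partial f)(0|0)(w)$ with $zw=0$, and $0$ is not a strong local minimizer of $f$ (the quadratic growth condition fails at $0$).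
   Context: The proximal subdifferential is $\partial_p f(\bar x)=\{v\mid \liminf_{x\to\bar x}\frac{f(x)-f(\bar x)-\langle v,x-\bar x\rangle}{\|x-\bar x\|^2}>-\infty\}$; for convex $f$ it coincides with the convex and limiting subdifferential $\partial f$. The tangent cone is $T_\Omega(\bar u)=\{v\mid \exists t_k\downarrow0,\ v_k\to v,\ \bar u+t_kv_k\in\Omega\}$, and $DF(\bar x|\bar y)(w)=\{z\mid (w,z)\in T_{\operatorname{gph}F}(\bar x,\bar y)\}$. $\bar x$ is a strong local minimizer if there are $\kappa,\gamma>0$ with $f(x)-f(\bar x)\ge\frac\kappa2|x-\bar x|^2$ for $|x-\bar x|\le\gamma$. *)

theory Defs
  imports "HOL-Analysis.Analysis"
begin

definition prox_subdiff :: "(real \<Rightarrow> real) \<Rightarrow> real \<Rightarrow> real set" where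
  "prox_subdiff f xb = {v. Liminf (at xb)
      (\<lambda>x. ereal ((f x - f xb - v * (x - xb)) / (norm (x - xb))\<^sup>2)) > -\<infinity>}"

definition conv_subdiff :: "(real \<Rightarrow> real) \<Rightarrow> real \<Rightarrow> real set" where
  "conv_subdiff f xb = {v. \<forall>x. f x \<ge> f xb + v * (x - xb)}"

definition tangent_cone :: "'a::real_normed_vector set \<Rightarrow> 'a \<Rightarrow> 'a set" where
  "tangent_cone \<Omega> u = {v. \<exists>(t::nat \<Rightarrow> real) (vs::nat \<Rightarrow> 'a).
      (\<forall>k. t k > 0) \<and> t \<longlonglongrightarrow> 0 \<and> vs \<longlonglongrightarrow> v \<and> (\<forall>k. u + t k *\<^sub>R vs k \<in> \<Omega>)}"

definition gph :: "('a \<Rightarrow> 'b set) \<Rightarrow> ('a \<times> 'b) set" where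
  "gph F = {(x, y). y \<in> F x}"

definition graph_deriv ::
  "('a::real_normed_vector \<Rightarrow> 'b::real_normed_vector set) \<Rightarrow> 'a \<Rightarrow> 'b \<Rightarrow> 'a \<Rightarrow> 'b set" where
  "graph_deriv F xb yb w = {z. (w, z) \<in> tangent_cone (gph F) (xb, yb)}"

definition graph_deriv_dom ::
  "('a::real_normed_vector \<Rightarrow> 'b::real_normed_vector set) \<Rightarrow> 'a \<Rightarrow> 'b \<Rightarrow> 'a set" where
  "graph_deriv_dom F xb yb = {w. graph_deriv F xb yb w \<noteq> {}}"

definition strong_local_min :: "(real \<Rightarrow> real) \<Rightarrow> real \<Rightarrow> bool" where
  "strong_local_min f xb \<longleftrightarrow> (\<exists>\<kappa> \<gamma>. \<kappa> > 0 \<and> \<gamma> > 0 \<and>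
      (\<forall>x. \<bar>x - xb\<bar> \<le> \<gamma> \<longrightarrow> f x - f xb \<ge> \<kappa> / 2 * \<bar>x - xb\<bar>\<^sup>2))"

definition alpha :: "nat \<Rightarrow> real" where
  "alpha n = 1 / fact (n + 1)"

definition beta :: "nat \<Rightarrow> real" where
  "beta n = (\<Sum>k<n. 1 / (fact k * fact (k + 2)))"

definition betaL :: real where
  "betaL = lim beta"

definition fpos :: "real \<Rightarrow> real" where
  "fpos x = (if x > 1 then x
             else if x = 0 then betaL
             else (let n = (THE n. alpha (n + 1) < x \<and> x \<le> alpha n)
                   in alpha (n + 1) * x + beta (n + 1)))"

definition fex :: "real \<Rightarrow> real" where
  "fex x = (if x < 0 then fpos (- x) else fpos x)"

end

theory Submission
  imports Defs
begin

text \<open>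
  The function is even, and on \<open>(0, 1]\<close> it is the upper envelope of the lines
  \<open>\<alpha>\<^sub>m x + \<beta>\<^sub>m\<close>, consecutive lines meeting at the breakpoints \<open>\<alpha>\<^sub>m\<close>; so it has a supporting
  line everywhere, hence is convex, with minimum \<open>\<beta> = f 0\<close>.
  For \<open>0 \<le> x \<le> y\<close> the active slope at \<open>y\<close> is at most \<open>y\<close>, so \<open>f y - f x \<le> y (y - x)\<close>, and \<open>f\<close> is
  nondecreasing on \<open>[0, \<infinity>)\<close>. These second-order bounds force every proximal subgradient
  \<open>v\<close> at \<open>x\<close> to lie between \<open>0\<close> and \<open>x\<close>, so the tangent cone to the graph lies in the closed
  cone \<open>{(w, z). z between 0 and w}\<close>. Conversely \<open>\<partial>f(\<alpha>\<^sub>k) \<supseteq> [\<alpha>\<^sub>k\<^sub>+\<^sub>1, \<alpha>\<^sub>k]\<close> and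
  \<open>\<alpha>\<^sub>k\<^sub>+\<^sub>1 / \<alpha>\<^sub>k = 1 / (k + 2) \<rightarrow> 0\<close>, so rays through these vertical segments of the graph
  realise every slope in \<open>[0, 1]\<close>. Finally \<open>f(\<alpha>\<^sub>n) - f 0 \<le> \<alpha>\<^sub>n\<^sub>+\<^sub>1 \<alpha>\<^sub>n = \<alpha>\<^sub>n\<^sup>2 / (n + 2)\<close>, so
  the growth at \<open>0\<close> is not quadratic.
\<close>

lemma convex_on_if_conv_subdiff_nonempty:
  fixes f :: "real \<Rightarrow> real"
  assumes "\<And>z. conv_subdiff f z \<noteq> {}"
  shows "convex_on UNIV f"
proof (rule convex_onI)
  fix t x y :: real
  assume t: "0 < t" "t < 1"
  define z where "z = (1 - t) *\<^sub>R x + t *\<^sub>R y"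
  obtain a where a: "\<And>y. f z + a * (y - z) \<le> f y"
    using assms[of z] by (auto simp: conv_subdiff_def)
  have "f z = (1 - t) * (f z + a * (x - z)) + t * (f z + a * (y - z))"
    by (simp add: z_def algebra_simps)
  also have "\<dots> \<le> (1 - t) * f x + t * f y"
    using a t by (intro add_mono mult_left_mono) auto
  finally show "f ((1 - t) *\<^sub>R x + t *\<^sub>R y) \<le> (1 - t) * f x + t * f y"
    by (simp add: z_def)
qed simp

lemma conv_subdiff_subset_prox_subdiff: "conv_subdiff f x \<subseteq> prox_subdiff f x"
proof
  fix v assume v: "v \<in> conv_subdiff f x"
  let ?q = "\<lambda>y. ereal ((f y - f x - v * (y - x)) / (norm (y - x))\<^sup>2)"
  have "\<And>y. 0 \<le> ?q y"
    using v by (simp add: conv_subdiff_def algebra_simps)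
  then have "0 \<le> Liminf (at x) ?q"
    by (intro Liminf_bounded always_eventually) auto
  then show "v \<in> prox_subdiff f x"
    by (auto simp: prox_subdiff_def less_le_trans)
qed

lemma conv_subdiff_even:
  assumes "\<And>y. f (- y) = f y" "v \<in> conv_subdiff f x"
  shows "- v \<in> conv_subdiff f (- x)"
  unfolding conv_subdiff_def
proof (intro CollectI allI)
  fix y
  have "f x + v * (- y - x) \<le> f (- y)"
    using assms(2) by (simp add: conv_subdiff_def)
  then show "f (- x) + - v * (y - - x) \<le> f y"
    using assms(1)[of x] assms(1)[of y] by (simp add: algebra_simps)
qed

lemma prox_subdiff_quadratic_bound:
  assumes "v \<in> prox_subdiff f x"
  obtains c d where "d > 0" "\<And>h. h \<noteq> 0 \<Longrightarrow> \<bar>h\<bar> < d \<Longrightarrow> c * h\<^sup>2 \<le> f (x + h) - f x - v * h"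
proof -
  let ?q = "\<lambda>y. ereal ((f y - f x - v * (y - x)) / (norm (y - x))\<^sup>2)"
  have "- \<infinity> < Liminf (at x) ?q"
    using assms by (simp add: prox_subdiff_def)
  then obtain c where "ereal c < Liminf (at x) ?q"
    using ereal_dense2 by blast
  then have "\<forall>\<^sub>F y in at x. ereal c < ?q y"
    by (rule less_LiminfD)
  then obtain d where "d > 0" and d: "\<And>y. y \<noteq> x \<Longrightarrow> dist y x < d \<Longrightarrow> ereal c < ?q y"
    unfolding eventually_at by blast
  have "c * h\<^sup>2 \<le> f (x + h) - f x - v * h" if "h \<noteq> 0" "\<bar>h\<bar> < d" for h
    using d[of "x + h"] that by (simp add: dist_real_def pos_less_divide_eq less_imp_le)
  with \<open>d > 0\<close> show thesis
    by (rule that)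
qed

lemma prox_subdiff_le_right_slope:
  assumes "v \<in> prox_subdiff f x" "\<And>h. 0 < h \<Longrightarrow> f (x + h) - f x \<le> a * h + K * h\<^sup>2"
  shows "v \<le> a"
proof -
  obtain c d where "d > 0" and c: "\<And>h. h \<noteq> 0 \<Longrightarrow> \<bar>h\<bar> < d \<Longrightarrow> c * h\<^sup>2 \<le> f (x + h) - f x - v * h"
    using prox_subdiff_quadratic_bound[OF assms(1)] by blast
  have bound: "v \<le> a + (K - c) * h" if "0 < h" "h < d" for h
  proof -
    have "(c * h) * h \<le> (a + K * h - v) * h"
      using c[of h] assms(2)[of h] that by (simp add: power2_eq_square algebra_simps)
    then have "c * h \<le> a + K * h - v"
      using \<open>0 < h\<close> by (rule mult_right_le_imp_le)
    then show ?thesis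
      by (simp add: algebra_simps)
  qed
  have "\<forall>\<^sub>F h in at_right 0. v \<le> a + (K - c) * h"
    using eventually_at_right_real[OF \<open>d > 0\<close>] by (rule eventually_mono) (simp add: bound)
  moreover have "((\<lambda>h. a + (K - c) * h) \<longlongrightarrow> a) (at_right 0)"
    by (auto intro!: tendsto_eq_intros)
  ultimately show ?thesis
    by (intro tendsto_lowerbound) auto
qed

lemma prox_subdiff_ge_left_slope:
  assumes "v \<in> prox_subdiff f x" "\<And>h. 0 < h \<Longrightarrow> f (x - h) - f x \<le> - a * h + K * h\<^sup>2"
  shows "a \<le> v"
proof -
  obtain c d where "d > 0" and c: "\<And>h. h \<noteq> 0 \<Longrightarrow> \<bar>h\<bar> < d \<Longrightarrow> c * h\<^sup>2 \<le> f (x + h) - f x - v * h"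
    using prox_subdiff_quadratic_bound[OF assms(1)] by blast
  have bound: "a \<le> v + (K - c) * h" if "0 < h" "h < d" for h
  proof -
    have "(c * h) * h \<le> (v - a + K * h) * h"
      using c[of "- h"] assms(2)[of h] that by (simp add: power2_eq_square algebra_simps)
    then have "c * h \<le> v - a + K * h"
      using \<open>0 < h\<close> by (rule mult_right_le_imp_le)
    then show ?thesis
      by (simp add: algebra_simps)
  qed
  have "\<forall>\<^sub>F h in at_right 0. a \<le> v + (K - c) * h"
    using eventually_at_right_real[OF \<open>d > 0\<close>] by (rule eventually_mono) (simp add: bound)
  moreover have "((\<lambda>h. v + (K - c) * h) \<longlongrightarrow> v) (at_right 0)"
    by (auto intro!: tendsto_eq_intros)
  ultimately show ?thesis
    by (intro tendsto_lowerbound) auto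
qed

lemma gph_mono: "(\<And>x. F x \<subseteq> G x) \<Longrightarrow> gph F \<subseteq> gph G"
  by (auto simp: gph_def)

lemma tangent_cone_mono: "S \<subseteq> T \<Longrightarrow> tangent_cone S u \<subseteq> tangent_cone T u"
  unfolding tangent_cone_def by blast

lemma zero_in_tangent_cone:
  assumes "u \<in> S"
  shows "0 \<in> tangent_cone S u"
  unfolding tangent_cone_def
proof (intro CollectI exI conjI allI)
  show "(\<lambda>k. inverse (real (Suc k))) \<longlonglongrightarrow> 0"
    by (rule LIMSEQ_inverse_real_of_nat)
qed (use assms in auto)

lemma tangent_cone_scaleR:
  assumes "c > 0" "v \<in> tangent_cone S u"
  shows "c *\<^sub>R v \<in> tangent_cone S u"
proof -
  obtain t vs where t: "\<And>k. t k > 0" "t \<longlonglongrightarrow> 0" and vs: "vs \<longlonglongrightarrow> v"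
    and mem: "\<And>k. u + t k *\<^sub>R vs k \<in> S"
    using assms(2) unfolding tangent_cone_def by blast
  have "(\<lambda>k. t k / c) \<longlonglongrightarrow> 0"
    using tendsto_divide_zero[OF t(2), of c] by simp
  moreover have "(\<lambda>k. c *\<^sub>R vs k) \<longlonglongrightarrow> c *\<^sub>R v"
    by (intro tendsto_intros vs)
  moreover have "u + (t k / c) *\<^sub>R (c *\<^sub>R vs k) \<in> S" for k
    using mem[of k] assms(1) by simp
  ultimately show ?thesis
    unfolding tangent_cone_def using t(1) assms(1)
    by (intro CollectI exI[of _ "\<lambda>k. t k / c"] exI[of _ "\<lambda>k. c *\<^sub>R vs k"]) auto
qed

lemma tangent_cone_uminus:
  assumes "\<And>x. x \<in> S \<Longrightarrow> - x \<in> S" "v \<in> tangent_cone S 0"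
  shows "- v \<in> tangent_cone S 0"
proof -
  obtain t vs where t: "\<And>k. t k > 0" "t \<longlonglongrightarrow> 0" and vs: "vs \<longlonglongrightarrow> v"
    and mem: "\<And>k. t k *\<^sub>R vs k \<in> S"
    using assms(2) unfolding tangent_cone_def by auto
  have "(\<lambda>k. - vs k) \<longlonglongrightarrow> - v"
    by (intro tendsto_intros vs)
  moreover have "0 + t k *\<^sub>R (- vs k) \<in> S" for k
    using assms(1)[OF mem[of k]] by simp
  ultimately show ?thesis
    unfolding tangent_cone_def using t by (intro CollectI exI[of _ t] exI[of _ "\<lambda>k. - vs k"]) auto
qed

lemma tangent_cone_subset_closed_cone:
  assumes "closed K" "cone K" "S \<subseteq> K"
  shows "tangent_cone S 0 \<subseteq> K"
proof
  fix v assume "v \<in> tangent_cone S 0"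
  then obtain t vs where t: "\<And>k. t k > 0" and vs: "vs \<longlonglongrightarrow> v"
    and mem: "\<And>k. t k *\<^sub>R vs k \<in> S"
    unfolding tangent_cone_def by auto
  have "vs k = inverse (t k) *\<^sub>R (t k *\<^sub>R vs k)" for k
    using t[of k] by simp
  then have "vs k \<in> K" for k
    using assms(2,3) mem[of k] t[of k] unfolding cone_def
    by (metis inverse_nonnegative_iff_nonnegative less_imp_le subsetD)
  then show "v \<in> K"
    using closed_sequentially[OF assms(1)] vs by blast
qed

lemma LIMSEQ_inverse_real_plus_2: "(\<lambda>n. inverse (real n + 2)) \<longlonglongrightarrow> 0"
  using LIMSEQ_Suc[OF LIMSEQ_inverse_real_of_nat] by (simp add: add.commute)

lemma alpha_pos: "alpha n > 0"
  by (simp add: alpha_def)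

lemma alpha_0: "alpha 0 = 1"
  by (simp add: alpha_def)

lemma alpha_Suc: "alpha (Suc n) = alpha n / (real n + 2)"
  by (simp add: alpha_def field_simps)

lemma alpha_Suc_less: "alpha (Suc n) < alpha n"
  using alpha_pos[of n] by (simp add: alpha_Suc divide_less_eq)

lemma decseq_alpha: "decseq alpha"
  using alpha_Suc_less by (intro decseq_SucI less_imp_le)

lemma alpha_le_one: "alpha n \<le> 1"
  using decseqD[OF decseq_alpha, of 0 n] by (simp add: alpha_0)

lemma LIMSEQ_alpha: "alpha \<longlonglongrightarrow> 0"
proof (rule tendsto_sandwich[of "\<lambda>_. 0" _ _ "\<lambda>n. inverse (real (Suc n))"])
  have "alpha n \<le> inverse (real (Suc n))" for n
  proof -
    have "real (Suc n) \<le> fact (Suc n)"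
      by (metis fact_ge_self of_nat_fact of_nat_le_iff)
    then show ?thesis
      by (simp add: alpha_def field_simps)
  qed
  then show "\<forall>\<^sub>F n in sequentially. alpha n \<le> inverse (real (Suc n))"
    by simp
  show "(\<lambda>n. inverse (real (Suc n))) \<longlonglongrightarrow> 0"
    by (rule LIMSEQ_inverse_real_of_nat)
qed (auto simp: alpha_pos less_imp_le)

lemma beta_Suc: "beta (Suc n) = beta n + alpha n * (alpha n - alpha (Suc n))"
proof -
  have "1 / (fact n * fact (n + 2)) = alpha n * (alpha n - alpha (Suc n))"
    by (simp add: alpha_def numeral_2_eq_2 divide_simps)
  then show ?thesis
    by (simp add: beta_def)
qed

definition piece :: "nat \<Rightarrow> real \<Rightarrow> real" where
  "piece m x = alpha m * x + beta m"

lemma piece_diff_Suc: "piece m x - piece (Suc m) x = (alpha m - alpha (Suc m)) * (x - alpha m)"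
  by (simp add: piece_def beta_Suc algebra_simps)

lemma piece_le_active_piece:
  assumes "alpha p \<le> x" "\<forall>j<p. x \<le> alpha j"
  shows "piece m x \<le> piece p x"
proof (cases "p \<le> m")
  case True
  then show ?thesis
  proof (induction m rule: dec_induct)
    case (step n)
    have "alpha (Suc n) \<le> alpha n" "alpha n \<le> x"
      using decseqD[OF decseq_alpha] step(1) assms(1) by (auto intro: order_trans)
    then have "0 \<le> (alpha n - alpha (Suc n)) * (x - alpha n)"
      by (intro mult_nonneg_nonneg) auto
    then have "piece (Suc n) x \<le> piece n x"
      using piece_diff_Suc[of n x] by linarith
    then show ?case
      using step.IH by linarith
  qed simp
next
  case False
  then have "m \<le> p" by simp
  then show ?thesis
  proof (induction m rule: inc_induct)
    case (step n)
    have "alpha (Suc n) \<le> alpha n" "x \<le> alpha n"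
      using decseqD[OF decseq_alpha] step(2) assms(2) by auto
    then have "(alpha n - alpha (Suc n)) * (x - alpha n) \<le> 0"
      by (intro mult_nonneg_nonpos) auto
    then have "piece n x \<le> piece (Suc n) x"
      using piece_diff_Suc[of n x] by linarith
    then show ?case
      using step.IH by linarith
  qed simp
qed

lemma ex1_alpha_interval:
  assumes "0 < x" "x \<le> 1"
  shows "\<exists>!n. alpha (n + 1) < x \<and> x \<le> alpha n"
proof (rule ex_ex1I)
  have "\<forall>\<^sub>F n in sequentially. alpha n < x"
    using LIMSEQ_alpha assms(1) by (simp add: order_tendsto_iff)
  then obtain N where "alpha N < x"
    by (metis eventually_sequentially order_refl)
  define n0 where "n0 = (LEAST n. alpha n < x)"
  have below: "alpha n0 < x"
    unfolding n0_def by (rule LeastI) fact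
  then obtain n where n: "n0 = Suc n"
    using assms(2) alpha_0 by (cases n0) auto
  have "\<not> alpha n < x"
    using not_less_Least[of n "\<lambda>n. alpha n < x"] n unfolding n0_def by simp
  then show "\<exists>n. alpha (n + 1) < x \<and> x \<le> alpha n"
    using below n by auto
next
  fix m n
  assume "alpha (m + 1) < x \<and> x \<le> alpha m" "alpha (n + 1) < x \<and> x \<le> alpha n"
  then show "m = n"
    using decseqD[OF decseq_alpha, of "m + 1" n] decseqD[OF decseq_alpha, of "n + 1" m]
    by (metis not_less_eq_eq Suc_eq_plus1 linorder_neqE_nat not_le order_trans)
qed

lemma fpos_eq_piece:
  assumes "alpha (n + 1) < x" "x \<le> alpha n"
  shows "fpos x = piece (Suc n) x"
proof -
  have "0 < x" "x \<le> 1"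
    using assms alpha_pos[of "n + 1"] alpha_le_one[of n] by linarith+
  moreover have "(THE n. alpha (n + 1) < x \<and> x \<le> alpha n) = n"
    using ex1_alpha_interval[OF calculation] assms by (intro the1_equality) auto
  ultimately show ?thesis
    by (simp add: fpos_def piece_def)
qed

lemma fpos_eq_active_piece:
  assumes "x > 0"
  obtains p where "fpos x = piece p x" "alpha p \<le> x" "\<forall>j<p. x \<le> alpha j"
proof (cases "x > 1")
  case True
  then show ?thesis
    using that[of 0] by (simp add: fpos_def piece_def alpha_0 beta_def)
next
  case False
  then obtain n where n: "alpha (n + 1) < x" "x \<le> alpha n"
    using ex1_alpha_interval assms by force
  have "\<forall>j<Suc n. x \<le> alpha j"
    using n(2) decseqD[OF decseq_alpha] by (auto simp: less_Suc_eq_le intro: order_trans)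
  then show ?thesis
    using that[of "Suc n"] fpos_eq_piece[OF n] n by simp
qed

lemma fpos_ge_piece: "x > 0 \<Longrightarrow> piece m x \<le> fpos x"
  by (metis fpos_eq_active_piece piece_le_active_piece)

lemma incseq_beta: "incseq beta"
  by (rule incseq_SucI) (simp add: beta_Suc alpha_pos less_imp_le decseqD[OF decseq_alpha])

lemma LIMSEQ_beta: "beta \<longlonglongrightarrow> betaL"
proof -
  have "beta n \<le> fpos 1" for n
    using fpos_ge_piece[of 1 n] alpha_pos[of n] by (simp add: piece_def)
  then have "convergent beta"
    using incseq_convergent[OF incseq_beta] by (metis convergent_def)
  then show ?thesis
    unfolding betaL_def by (rule convergent_LIMSEQ_iff[THEN iffD1])
qed

lemma beta_le_betaL: "beta n \<le> betaL"
  by (rule incseq_le[OF incseq_beta LIMSEQ_beta])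

lemma fex_abs: "fex y = fpos \<bar>y\<bar>"
  by (simp add: fex_def abs_if)

lemma fex_0: "fex 0 = betaL"
  by (simp add: fex_def fpos_def)

lemma fex_minus: "fex (- y) = fex y"
  by (simp add: fex_abs)

lemma fex_ge_piece: "piece m \<bar>y\<bar> \<le> fex y"
proof (cases "y = 0")
  case True
  then show ?thesis
    by (simp add: fex_0 piece_def beta_le_betaL)
next
  case False
  then show ?thesis
    using fpos_ge_piece[of "\<bar>y\<bar>" m] by (simp add: fex_abs)
qed

lemma fex_eq_active_piece:
  assumes "y \<noteq> 0"
  obtains p where "fex y = piece p \<bar>y\<bar>" "alpha p \<le> \<bar>y\<bar>"
  using fpos_eq_active_piece[of "\<bar>y\<bar>"] assms by (metis fex_abs zero_less_abs_iff)

lemma fex_0_le: "fex 0 \<le> fex y"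
proof -
  have "beta m \<le> fex y" for m
  proof -
    have "0 \<le> alpha m * \<bar>y\<bar>"
      using alpha_pos[of m] by simp
    then show ?thesis
      using fex_ge_piece[of m y] by (simp add: piece_def)
  qed
  then show ?thesis
    unfolding fex_0 using LIMSEQ_le_const2[OF LIMSEQ_beta] by blast
qed

lemma conv_subdiff_fex_nonempty: "conv_subdiff fex z \<noteq> {}"
proof (cases "z = 0")
  case True
  then have "0 \<in> conv_subdiff fex z"
    using fex_0_le by (simp add: conv_subdiff_def)
  then show ?thesis by blast
next
  case False
  then obtain p where p: "fex z = piece p \<bar>z\<bar>"
    using fex_eq_active_piece by blast
  have "fex z + sgn z * alpha p * (y - z) \<le> fex y" for y
  proof -
    have "fex z + sgn z * alpha p * (y - z) = piece p (sgn z * y)"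
      unfolding p abs_sgn[of z] piece_def by (simp add: algebra_simps)
    also have "\<dots> \<le> piece p \<bar>y\<bar>"
      using abs_ge_self[of y] abs_ge_minus_self[of y] alpha_pos[of p]
      by (simp add: piece_def sgn_if)
    also have "\<dots> \<le> fex y"
      by (rule fex_ge_piece)
    finally show ?thesis .
  qed
  then have "sgn z * alpha p \<in> conv_subdiff fex z"
    by (simp add: conv_subdiff_def)
  then show ?thesis by blast
qed

lemma convex_on_fex: "convex_on UNIV fex"
  by (rule convex_on_if_conv_subdiff_nonempty[OF conv_subdiff_fex_nonempty])

lemma continuous_on_fex: "continuous_on UNIV fex"
  by (rule convex_on_continuous[OF open_UNIV convex_on_fex])

lemma fex_mono:
  assumes "0 \<le> y" "y \<le> x"
  shows "fex y \<le> fex x"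
proof (cases "y = 0")
  case True
  then show ?thesis using fex_0_le by simp
next
  case False
  then obtain p where "fex y = piece p y"
    using fex_eq_active_piece assms(1) by (metis abs_of_nonneg)
  moreover have "piece p y \<le> piece p x"
    using alpha_pos[of p] assms by (simp add: piece_def)
  ultimately show ?thesis
    using fex_ge_piece[of p x] assms by simp
qed

lemma fex_increase_le:
  assumes "0 \<le> x" "x \<le> y"
  shows "fex y - fex x \<le> y * (y - x)"
proof (cases "y = 0")
  case True
  then show ?thesis using assms by simp
next
  case False
  then obtain p where p: "fex y = piece p y" "alpha p \<le> y"
    using fex_eq_active_piece assms by (metis abs_of_nonneg order_trans)
  have "alpha p * (y - x) \<le> y * (y - x)"
    using p(2) assms by (simp add: mult_right_mono)
  then show ?thesis
    using p(1) fex_ge_piece[of p x] assms by (simp add: piece_def algebra_simps)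
qed

lemma fex_decrease_le:
  assumes "0 \<le> x" "0 < h"
  shows "fex (x - h) - fex x \<le> h\<^sup>2"
proof (cases "\<bar>x - h\<bar> \<le> x")
  case True
  then have "fex (x - h) \<le> fex x"
    using fex_mono[of "\<bar>x - h\<bar>" x] by (metis abs_ge_zero abs_idempotent fex_abs)
  then show ?thesis
    using zero_le_power2[of h] by linarith
next
  case False
  then have "x \<le> h - x"
    using assms by (auto split: abs_split)
  moreover have "fex (x - h) = fex (h - x)"
    using fex_minus[of "h - x"] by simp
  ultimately have "fex (x - h) - fex x \<le> (h - x) * (h - 2 * x)"
    using fex_increase_le[of x "h - x"] assms by simp
  also have "\<dots> \<le> h * h"
    using assms \<open>x \<le> h - x\<close> by (intro mult_mono) auto
  finally show ?thesis
    by (simp add: power2_eq_square)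
qed

lemma fex_alpha: "fex (alpha n) = piece (Suc n) (alpha n)"
  using fpos_eq_piece[of n "alpha n"] alpha_Suc_less[of n] alpha_pos[of n]
  by (simp add: fex_abs)

definition between_cone :: "(real \<times> real) set" where
  "between_cone = {(w, z). 0 \<le> z \<and> z \<le> w} \<union> {(w, z). 0 \<ge> z \<and> z \<ge> w}"

lemma closed_between_cone: "closed between_cone"
proof -
  have "between_cone = ({p. 0 \<le> snd p} \<inter> {p. snd p \<le> fst p}) \<union> ({p. snd p \<le> 0} \<inter> {p. fst p \<le> snd p})"
    unfolding between_cone_def by auto
  also have "closed \<dots>"
    by (intro closed_Un closed_Int closed_Collect_le continuous_intros)
  finally show ?thesis .
qed

lemma cone_between_cone: "cone between_cone"
  unfolding cone_def between_cone_def by (auto intro: mult_left_mono mult_nonneg_nonneg mult_nonneg_nonpos)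

lemma prox_subdiff_fex_in_between_cone:
  assumes "v \<in> prox_subdiff fex x"
  shows "(x, v) \<in> between_cone"
proof (cases "0 \<le> x")
  case True
  have "v \<le> x"
  proof (rule prox_subdiff_le_right_slope[OF assms, where K = 1])
    fix h :: real assume "0 < h"
    then show "fex (x + h) - fex x \<le> x * h + 1 * h\<^sup>2"
      using fex_increase_le[of x "x + h"] True by (simp add: power2_eq_square algebra_simps)
  qed
  moreover have "0 \<le> v"
  proof (rule prox_subdiff_ge_left_slope[OF assms, where K = 1])
    fix h :: real assume "0 < h"
    then show "fex (x - h) - fex x \<le> - 0 * h + 1 * h\<^sup>2"
      using fex_decrease_le[of x h] True by simp
  qed
  ultimately show ?thesis
    unfolding between_cone_def by simp
next
  case False
  have "v \<le> 0"
  proof (rule prox_subdiff_le_right_slope[OF assms, where K = 1])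
    fix h :: real assume "0 < h"
    then show "fex (x + h) - fex x \<le> 0 * h + 1 * h\<^sup>2"
      using fex_decrease_le[of "- x" h] False fex_minus[of x] fex_minus[of "x + h"] by simp
  qed
  moreover have "x \<le> v"
  proof (rule prox_subdiff_ge_left_slope[OF assms, where K = 1])
    fix h :: real assume "0 < h"
    then show "fex (x - h) - fex x \<le> - x * h + 1 * h\<^sup>2"
      using fex_increase_le[of "- x" "- x + h"] False fex_minus[of x] fex_minus[of "x - h"]
      by (simp add: power2_eq_square algebra_simps)
  qed
  ultimately show ?thesis
    unfolding between_cone_def by simp
qed

lemma conv_subdiff_fex_alpha:
  assumes "alpha (Suc n) \<le> s" "s \<le> alpha n"
  shows "s \<in> conv_subdiff fex (alpha n)"
proof -
  note right = fex_alpha[of n]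
  then have left: "fex (alpha n) = piece n (alpha n)"
    using piece_diff_Suc[of n "alpha n"] by simp
  have "fex (alpha n) + s * (y - alpha n) \<le> fex y" for y
  proof (cases "alpha n \<le> y")
    case True
    then have "s * (y - alpha n) \<le> alpha n * (y - alpha n)"
      using assms(2) by (intro mult_right_mono) auto
    then have "fex (alpha n) + s * (y - alpha n) \<le> piece n y"
      using left by (simp add: piece_def algebra_simps)
    also have "\<dots> \<le> piece n \<bar>y\<bar>"
      using alpha_pos[of n] by (simp add: piece_def)
    finally show ?thesis
      using fex_ge_piece[of n y] by linarith
  next
    case False
    then have "s * (y - alpha n) \<le> alpha (Suc n) * (y - alpha n)"
      using assms(1) by (intro mult_right_mono_neg) auto
    then have "fex (alpha n) + s * (y - alpha n) \<le> piece (Suc n) y"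
      using right by (simp add: piece_def algebra_simps)
    also have "\<dots> \<le> piece (Suc n) \<bar>y\<bar>"
      using alpha_pos[of "Suc n"] by (simp add: piece_def)
    finally show ?thesis
      using fex_ge_piece[of "Suc n" y] by linarith
  qed
  then show ?thesis
    by (simp add: conv_subdiff_def)
qed

lemma slope_in_tangent_cone_conv_subdiff_fex:
  assumes "0 \<le> r" "r \<le> 1"
  shows "(1, r) \<in> tangent_cone (gph (conv_subdiff fex)) (0, 0)"
proof -
  define s where "s k = max r (inverse (real k + 2))" for k :: nat
  have "s \<longlonglongrightarrow> max r 0"
    unfolding s_def by (intro tendsto_intros LIMSEQ_inverse_real_plus_2)
  then have "(\<lambda>k. (1, s k)) \<longlonglongrightarrow> (1, r)"
    using assms(1) by (intro tendsto_Pair tendsto_const) (simp add: max_absorb1)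
  moreover have "alpha k * s k \<in> conv_subdiff fex (alpha k)" for k
  proof (rule conv_subdiff_fex_alpha)
    show "alpha (Suc k) \<le> alpha k * s k"
      using alpha_pos[of k] by (simp add: alpha_Suc s_def divide_inverse mult_left_mono)
    have "inverse (real k + 2) \<le> 1"
      by (simp add: inverse_le_1_iff)
    then show "alpha k * s k \<le> alpha k"
      using alpha_pos[of k] assms(2) by (simp add: s_def mult_left_le)
  qed
  ultimately show ?thesis
    unfolding tangent_cone_def using alpha_pos LIMSEQ_alpha
    by (intro CollectI exI[of _ alpha] exI[of _ "\<lambda>k. (1, s k)"]) (auto simp: gph_def)
qed

lemma between_cone_subset_tangent_cone_conv_subdiff_fex:
  "between_cone \<subseteq> tangent_cone (gph (conv_subdiff fex)) (0, 0)"
proof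
  fix p assume "p \<in> between_cone"
  then obtain w z where p: "p = (w, z)" and wz: "0 \<le> z \<and> z \<le> w \<or> z \<le> 0 \<and> w \<le> z"
    unfolding between_cone_def by auto
  let ?T = "tangent_cone (gph (conv_subdiff fex)) 0"
  have symmetric: "- q \<in> gph (conv_subdiff fex)" if "q \<in> gph (conv_subdiff fex)" for q
    using that conv_subdiff_even[of fex, OF fex_minus] by (cases q) (auto simp: gph_def)
  consider "w = 0" | "w > 0" | "w < 0" by linarith
  then have "(w, z) \<in> ?T"
  proof cases
    case 1
    then have "(w, z) = 0"
      using wz by (auto simp: zero_prod_def)
    moreover have "0 \<in> gph (conv_subdiff fex)"
      using fex_0_le by (simp add: gph_def conv_subdiff_def zero_prod_def)
    ultimately show ?thesis
      using zero_in_tangent_cone by metis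
  next
    case 2
    with wz have "0 \<le> z / w" "z / w \<le> 1"
      by auto
    then have "(1, z / w) \<in> ?T"
      using slope_in_tangent_cone_conv_subdiff_fex[of "z / w"] by (simp add: zero_prod_def)
    then have "w *\<^sub>R (1, z / w) \<in> ?T"
      using 2 by (rule tangent_cone_scaleR[rotated])
    then show ?thesis
      using 2 by simp
  next
    case 3
    with wz have "0 \<le> z / w" "z / w \<le> 1"
      by (auto simp: zero_le_divide_iff divide_le_eq_1)
    then have "(1, z / w) \<in> ?T"
      using slope_in_tangent_cone_conv_subdiff_fex[of "z / w"] by (simp add: zero_prod_def)
    then have "- ((- w) *\<^sub>R (1, z / w)) \<in> ?T"
      using 3 by (intro tangent_cone_uminus[OF symmetric] tangent_cone_scaleR) auto
    then show ?thesis
      using 3 by simp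
  qed
  then show "p \<in> tangent_cone (gph (conv_subdiff fex)) (0, 0)"
    by (simp add: p zero_prod_def)
qed

lemma tangent_cone_gph_prox_subdiff_fex:
  "tangent_cone (gph (prox_subdiff fex)) (0, 0) = between_cone"
proof
  have "gph (prox_subdiff fex) \<subseteq> between_cone"
    using prox_subdiff_fex_in_between_cone by (auto simp: gph_def)
  from tangent_cone_subset_closed_cone[OF closed_between_cone cone_between_cone this]
  show "tangent_cone (gph (prox_subdiff fex)) (0, 0) \<subseteq> between_cone"
    by (simp add: zero_prod_def)
  have "gph (conv_subdiff fex) \<subseteq> gph (prox_subdiff fex)"
    by (rule gph_mono[OF conv_subdiff_subset_prox_subdiff])
  then show "between_cone \<subseteq> tangent_cone (gph (prox_subdiff fex)) (0, 0)"
    using between_cone_subset_tangent_cone_conv_subdiff_fex tangent_cone_mono by blast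
qed

lemma fex_alpha_growth: "fex (alpha n) - fex 0 \<le> (alpha n)\<^sup>2 * inverse (real n + 2)"
  using beta_le_betaL[of "Suc n"]
  by (simp add: fex_alpha fex_0 piece_def alpha_Suc power2_eq_square divide_inverse)

lemma not_strong_local_min_fex: "\<not> strong_local_min fex 0"
proof
  assume "strong_local_min fex 0"
  then obtain \<kappa> \<gamma> where "\<kappa> > 0" "\<gamma> > 0"
    and growth: "\<And>x. \<bar>x\<bar> \<le> \<gamma> \<Longrightarrow> \<kappa> / 2 * \<bar>x\<bar>\<^sup>2 \<le> fex x - fex 0"
    unfolding strong_local_min_def by auto
  have "\<forall>\<^sub>F n in sequentially. alpha n < \<gamma>"
    using LIMSEQ_alpha \<open>\<gamma> > 0\<close> by (simp add: order_tendsto_iff)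
  then have "\<forall>\<^sub>F n in sequentially. \<kappa> / 2 \<le> inverse (real n + 2)"
  proof (rule eventually_mono)
    fix n assume "alpha n < \<gamma>"
    then have "\<kappa> / 2 * (alpha n)\<^sup>2 \<le> fex (alpha n) - fex 0"
      using growth[of "alpha n"] alpha_pos[of n] by simp
    also have "\<dots> \<le> inverse (real n + 2) * (alpha n)\<^sup>2"
      using fex_alpha_growth[of n] by (simp add: mult.commute)
    finally show "\<kappa> / 2 \<le> inverse (real n + 2)"
      using alpha_pos[of n] by simp
  qed
  then have "\<kappa> / 2 \<le> 0"
    using LIMSEQ_inverse_real_plus_2 by (intro tendsto_lowerbound) auto
  then show False
    using \<open>\<kappa> > 0\<close> by simp
qed

theorem mainTheorem3:
  shows "continuous_on UNIV fex
    \<and> convex_on UNIV fex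
    \<and> (\<forall>x. fex 0 \<le> fex x)
    \<and> tangent_cone (gph (prox_subdiff fex)) (0, 0)
        = {(w, z). 0 \<le> z \<and> z \<le> w} \<union> {(w, z). 0 \<ge> z \<and> z \<ge> w}
    \<and> (\<forall>w \<in> graph_deriv_dom (prox_subdiff fex) 0 0. \<bar>w\<bar> = 1 \<longrightarrow>
          (\<exists>z \<in> graph_deriv (prox_subdiff fex) 0 0 w. z * w \<ge> 1))
    \<and> (\<exists>w z. w \<noteq> 0 \<and> z \<in> graph_deriv (conv_subdiff fex) 0 0 w \<and> z * w = 0)
    \<and> \<not> strong_local_min fex 0"
proof -
  have sufficient: "\<exists>z \<in> graph_deriv (prox_subdiff fex) 0 0 w. z * w \<ge> 1" if "\<bar>w\<bar> = 1" for w
  proof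
    show "w \<in> graph_deriv (prox_subdiff fex) 0 0 w"
      using tangent_cone_gph_prox_subdiff_fex by (auto simp: graph_deriv_def between_cone_def)
    show "w * w \<ge> 1"
      using that by (metis abs_mult_self_eq order_refl mult_1)
  qed
  have "(0::real) \<in> graph_deriv (conv_subdiff fex) 0 0 1"
    using between_cone_subset_tangent_cone_conv_subdiff_fex
    by (auto simp: graph_deriv_def between_cone_def)
  then have degenerate: "\<exists>w z. w \<noteq> 0 \<and> z \<in> graph_deriv (conv_subdiff fex) 0 0 w \<and> z * w = 0"
    by (intro exI[of _ "1::real"] exI[of _ "0::real"]) simp
  show ?thesis
    using continuous_on_fex convex_on_fex fex_0_le tangent_cone_gph_prox_subdiff_fex
      sufficient degenerate not_strong_local_min_fex
    by (simp add: between_cone_def)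
qed

end
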